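(* There exist a DAG $G$ and positive integers $g$ and $r_0$ with $4\mid r_0$ such that $\mathrm{OPT}^{(2)}<\mathrm{OPT}^{(1)}$ and $\mathrm{OPT}^{(2)}<\mathrm{OPT}^{(4)}$, where $\mathrm{OPT}^{(j)}$ denotes the MPP optimum of $G$ with $j$ processors, each having fast memory of size $r_0/j$ (same $g$ in all cases).
   Context: Multiprocessor red-blue pebbling (MPP). Input: a DAG $G=(V,E)$ with $n=|V|$ and positive integers $k$ (number of processors), $r$ (fast-memory size per processor), $g$ (cost of an I/O step). $\Delta_{in}$ denotes the maximum in-degree of $G$; sources/sinks are nodes of in-degree/out-degree $0$. A configuration is a tuple $(R^1,\dots,R^k,B)$ of subsets of $V$ ($R^j$ = nodes carrying a red pebble of processor $j$, $B$ = nodes carrying a blue pebble); it is valid if $|R^j|\le r$ for all $j$. The initial configuration has all sets empty; a configuration is terminal if every sink lies in $B\cup\bigcup_j R^j$. The transition rules are: (R1) for some $m\le k$, pairwise distinct processors $j_1,\dots,j_m$ and nodes $v_1,\dots,v_m$ with $v_i\in R^{j_i}$, add each $v_i$ to $B$ (cost $g$); (R2) for some $m\le k$, pairwise distinct processors $j_1,\dots,j_m$ and nodes $v_1,\dots,v_m\in B$, add each $v_i$ to $R^{j_i}$ (cost $g$); (R3) for some $m\le k$, pairwise distinct processors $j_1,\dots,j_m$ and nodes $v_1,\dots,v_m$ such that every in-neighbor of $v_i$ lies in $R^{j_i}$, add each $v_i$ to $R^{j_i}$ (cost $1$); (R4) remove a single red or blue pebble (cost $0$). A pebbling strategy is a sequence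 of valid configurations starting at the initial configuration and ending at a terminal one, each obtained from its predecessor by one rule; its cost is the sum of the costs of the rules applied. $\mathrm{OPT}$ denotes the minimum cost of a pebbling strategy. Applications of (R1),(R2) are called I/O steps and applications of (R3) compute steps. *)

theory Defs
  imports Main
begin

text \<open>Processors are 0..<k.
A configuration is a pair (R, B): R j is the set of red pebbles of processor j
(required empty for j \<ge> k), B the set of blue pebbles.\<close>

type_synonym 'v config = "(nat \<Rightarrow> 'v set) \<times> 'v set"

definition is_dag :: "'v set \<Rightarrow> ('v \<times> 'v) set \<Rightarrow> bool" where
  "is_dag V E \<longleftrightarrow> finite V \<and> E \<subseteq> V \<times> V \<and> acyclic E"

definition in_nbrs :: "('v \<times> 'v) set \<Rightarrow> 'v \<Rightarrow> 'v set" where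
  "in_nbrs E v = {u. (u, v) \<in> E}"

definition sinks :: "'v set \<Rightarrow> ('v \<times> 'v) set \<Rightarrow> 'v set" where
  "sinks V E = {v \<in> V. \<forall>w. (v, w) \<notin> E}"

definition initial_config :: "'v config" where
  "initial_config = ((\<lambda>j. {}), {})"

definition valid_config :: "nat \<Rightarrow> nat \<Rightarrow> 'v config \<Rightarrow> bool" where
  "valid_config k r C \<longleftrightarrow> (\<forall>j<k. card (fst C j) \<le> r \<and> finite (fst C j)) \<and> (\<forall>j\<ge>k. fst C j = {})"

definition terminal_config :: "'v set \<Rightarrow> ('v \<times> 'v) set \<Rightarrow> 'v config \<Rightarrow> bool" where
  "terminal_config V E C \<longleftrightarrow> sinks V E \<subseteq> snd C \<union> (\<Union>j. fst C j)"

text \<open>A parallel selection: pairs (processor, node), processors pairwise distinct and < k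
(hence at most k pairs).\<close>
definition selection :: "nat \<Rightarrow> (nat \<times> 'v) set \<Rightarrow> bool" where
  "selection k S \<longleftrightarrow> finite S \<and> inj_on fst S \<and> fst ` S \<subseteq> {..<k}"

definition add_red :: "(nat \<Rightarrow> 'v set) \<Rightarrow> (nat \<times> 'v) set \<Rightarrow> nat \<Rightarrow> 'v set" where
  "add_red R S = (\<lambda>j. R j \<union> {v. (j, v) \<in> S})"

definition mpp_step :: "'v set \<Rightarrow> ('v \<times> 'v) set \<Rightarrow> nat \<Rightarrow> nat \<Rightarrow>
    'v config \<Rightarrow> 'v config \<Rightarrow> nat \<Rightarrow> bool" where
  "mpp_step V E k g C C' c \<longleftrightarrow>
     (let R = fst C; B = snd C in
       \<comment> \<open>R1: save to slow memory\<close>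
       (\<exists>S. selection k S \<and> (\<forall>(j, v)\<in>S. v \<in> R j) \<and> C' = (R, B \<union> snd ` S) \<and> c = g)
     \<or> \<comment> \<open>R2: load from slow memory\<close>
       (\<exists>S. selection k S \<and> (\<forall>(j, v)\<in>S. v \<in> B) \<and> C' = (add_red R S, B) \<and> c = g)
     \<or> \<comment> \<open>R3: compute\<close>
       (\<exists>S. selection k S \<and> (\<forall>(j, v)\<in>S. v \<in> V \<and> in_nbrs E v \<subseteq> R j)
            \<and> C' = (add_red R S, B) \<and> c = 1)
     \<or> \<comment> \<open>R4: remove a single pebble\<close>
       (((\<exists>j v. v \<in> R j \<and> C' = (R(j := R j - {v}), B)) \<or> (\<exists>v. v \<in> B \<and> C' = (R, B - {v})))
        \<and> c = 0))"

definition pebbling_strategy :: "'v set \<Rightarrow> ('v \<times> 'v) set \<Rightarrow> nat \<Rightarrow> nat \<Rightarrow> nat \<Rightarrow>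
    'v config list \<Rightarrow> nat list \<Rightarrow> bool" where
  "pebbling_strategy V E k r g cs costs \<longleftrightarrow>
     length cs = Suc (length costs) \<and>
     cs ! 0 = initial_config \<and>
     terminal_config V E (last cs) \<and>
     (\<forall>i < length cs. valid_config k r (cs ! i)) \<and>
     (\<forall>i < length costs. mpp_step V E k g (cs ! i) (cs ! Suc i) (costs ! i))"

definition has_strategy :: "'v set \<Rightarrow> ('v \<times> 'v) set \<Rightarrow> nat \<Rightarrow> nat \<Rightarrow> nat \<Rightarrow> bool" where
  "has_strategy V E k r g \<longleftrightarrow> (\<exists>cs costs. pebbling_strategy V E k r g cs costs)"

definition OPT :: "'v set \<Rightarrow> ('v \<times> 'v) set \<Rightarrow> nat \<Rightarrow> nat \<Rightarrow> nat \<Rightarrow> nat" where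
  "OPT V E k r g = (LEAST c. \<exists>cs costs. pebbling_strategy V E k r g cs costs \<and> sum_list costs = c)"

end

theory Submission
  imports Defs
begin

text \<open>Take the DAG with edges 0,1 \<rightarrow> 2,3 \<rightarrow> 4 plus an isolated node 5, and r0 = 12, g = 100.
Two processors with memory 6 pebble it at cost 5: the first compute step computes 0 on one
processor and the sink 5 on the other, after which one processor computes 1, 2, 3, 4.
A compute step pebbles at most k new nodes, and in a DAG every node is an ancestor of a sink,
so every strategy pebbles all of V and costs at least |V|/k; for one processor this is 6.
Four processors with memory 3 cannot avoid I/O, hence pay at least g = 100: without I/O the
processor that computes 4 must hold 2 and 3, and at the moment the later of them was computed
it held 0, 1, 2 and 3, i.e. four red pebbles.\<close>

lemma selection_card: "selection k S \<Longrightarrow> card S \<le> k"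
proof -
  assume S: "selection k S"
  then have "card S = card (fst ` S)" unfolding selection_def by (simp add: card_image)
  also have "\<dots> \<le> card {..<k}" using S unfolding selection_def by (intro card_mono) auto
  finally show ?thesis by simp
qed

lemma selection_functional: "selection k S \<Longrightarrow> (j, v) \<in> S \<Longrightarrow> (j, w) \<in> S \<Longrightarrow> v = w"
  unfolding selection_def inj_on_def by force

definition pebbled :: "'v config \<Rightarrow> 'v set" where
  "pebbled C = snd C \<union> (\<Union>j. fst C j)"

lemma mpp_step_pebbled:
  assumes "mpp_step V E k g C C' c"
  shows "\<exists>N. pebbled C' \<subseteq> pebbled C \<union> N \<and> finite N \<and> card N \<le> k * c \<and>
      (\<forall>v\<in>N. in_nbrs E v \<subseteq> pebbled C)"
  using assms unfolding mpp_step_def Let_def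
proof (elim disjE exE conjE)
  fix S assume S: "selection k S" and computable: "\<forall>(j, v)\<in>S. v \<in> V \<and> in_nbrs E v \<subseteq> fst C j"
    and C': "C' = (add_red (fst C) S, snd C)" and c: "c = 1"
  have "finite S" using S by (simp add: selection_def)
  moreover have "card (snd ` S) \<le> k * c"
    using card_image_le[OF \<open>finite S\<close>, of snd] selection_card[OF S] c by simp
  moreover have "pebbled C' \<subseteq> pebbled C \<union> snd ` S"
    using C' by (force simp: pebbled_def add_red_def)
  moreover have "\<forall>v\<in>snd ` S. in_nbrs E v \<subseteq> pebbled C"
    using computable by (force simp: pebbled_def)
  ultimately show ?thesis by blast
qed (intro exI[of _ "{}"]; force simp: pebbled_def add_red_def split: if_splits)+

lemma mpp_step_without_io:
  assumes "mpp_step V E k g C C' c" "c \<noteq> g"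
  shows "snd C' \<subseteq> snd C \<and>
    (\<forall>j. fst C' j \<subseteq> fst C j \<or> (\<exists>v. fst C' j = insert v (fst C j) \<and> in_nbrs E v \<subseteq> fst C j))"
  using assms unfolding mpp_step_def Let_def
proof (elim disjE exE conjE)
  fix S assume S: "selection k S" and computable: "\<forall>(j, v)\<in>S. v \<in> V \<and> in_nbrs E v \<subseteq> fst C j"
    and C': "C' = (add_red (fst C) S, snd C)"
  have "fst C' j \<subseteq> fst C j \<or> (\<exists>v. fst C' j = insert v (fst C j) \<and> in_nbrs E v \<subseteq> fst C j)" for j
  proof (cases "\<exists>v. (j, v) \<in> S")
    case True
    then obtain v where v: "(j, v) \<in> S" by blast
    then have "{w. (j, w) \<in> S} = {v}" using selection_functional[OF S] by blast
    then have "fst C' j = insert v (fst C j)" using C' by (auto simp: add_red_def)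
    with v computable show ?thesis by auto
  qed (use C' in \<open>auto simp: add_red_def\<close>)
  with C' show ?thesis by simp
qed (auto split: if_splits)

lemma valid_config_red_card:
  "valid_config k r C \<Longrightarrow> finite (fst C j) \<and> card (fst C j) \<le> r"
  unfolding valid_config_def by (cases "j < k") auto

lemma pebbling_strategy_last:
  "pebbling_strategy V E k r g cs costs \<Longrightarrow> last cs = cs ! length costs"
  unfolding pebbling_strategy_def by (metis last_conv_nth diff_Suc_1 list.size(3) nat.distinct(1))

lemma OPT_le_cost: "pebbling_strategy V E k r g cs costs \<Longrightarrow> OPT V E k r g \<le> sum_list costs"
  unfolding OPT_def by (rule Least_le) blast

lemma OPT_attained:
  "has_strategy V E k r g \<Longrightarrow>
    \<exists>cs costs. pebbling_strategy V E k r g cs costs \<and> sum_list costs = OPT V E k r g"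
  unfolding has_strategy_def OPT_def by (rule LeastI_ex) blast

section \<open>Every node must be computed\<close>

definition pebbled_upto :: "'v config list \<Rightarrow> nat \<Rightarrow> 'v set" where
  "pebbled_upto cs i = (\<Union>t\<le>i. pebbled (cs ! t))"

lemma pebbled_upto_invariant:
  assumes "pebbling_strategy V E k r g cs costs" "i \<le> length costs"
  shows "finite (pebbled_upto cs i) \<and> card (pebbled_upto cs i) \<le> k * sum_list (take i costs) \<and>
    (\<forall>v\<in>pebbled_upto cs i. in_nbrs E v \<subseteq> pebbled_upto cs i)"
  using assms(2)
proof (induction i)
  case 0
  have "pebbled_upto cs 0 = {}"
    using assms(1) by (simp add: pebbling_strategy_def pebbled_upto_def pebbled_def initial_config_def)
  then show ?case by simp
next
  case (Suc i)
  let ?P = "pebbled_upto cs i" and ?P' = "pebbled_upto cs (Suc i)"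
  have IH: "finite ?P" "card ?P \<le> k * sum_list (take i costs)" "\<forall>v\<in>?P. in_nbrs E v \<subseteq> ?P"
    using Suc by auto
  have "mpp_step V E k g (cs ! i) (cs ! Suc i) (costs ! i)"
    using assms(1) Suc.prems unfolding pebbling_strategy_def by simp
  from mpp_step_pebbled[OF this] obtain N
    where N: "pebbled (cs ! Suc i) \<subseteq> pebbled (cs ! i) \<union> N" "finite N"
      "card N \<le> k * costs ! i" "\<forall>v\<in>N. in_nbrs E v \<subseteq> pebbled (cs ! i)"
    by blast
  have P': "?P' = ?P \<union> pebbled (cs ! Suc i)"
    unfolding pebbled_upto_def by (auto simp: atMost_Suc)
  have old: "pebbled (cs ! i) \<subseteq> ?P" unfolding pebbled_upto_def by auto
  have grow: "?P' \<subseteq> ?P \<union> N" using P' N(1) old by blast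
  have "card ?P' \<le> card (?P \<union> N)" using grow IH(1) N(2) by (intro card_mono) auto
  also have "\<dots> \<le> card ?P + card N" by (rule card_Un_le)
  also have "\<dots> \<le> k * sum_list (take (Suc i) costs)"
    using IH(2) N(3) Suc.prems by (simp add: take_Suc_conv_app_nth algebra_simps)
  finally have "card ?P' \<le> k * sum_list (take (Suc i) costs)" .
  moreover have "finite ?P'" using grow IH(1) N(2) by (simp add: finite_subset)
  moreover have "in_nbrs E v \<subseteq> ?P'" if "v \<in> ?P'" for v
  proof (cases "v \<in> ?P")
    case True
    then show ?thesis using IH(3) P' by blast
  next
    case False
    then have "v \<in> N" using grow that by blast
    then show ?thesis using N(4) old P' by blast
  qed
  ultimately show ?case by blast
qed

lemma dag_predecessor_closed_superset:
  assumes "is_dag V E" "sinks V E \<subseteq> P" "\<forall>v\<in>P. in_nbrs E v \<subseteq> P"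
  shows "V \<subseteq> P"
proof -
  have EV: "E \<subseteq> V \<times> V" and "finite E"
    using assms(1) finite_subset unfolding is_dag_def by auto
  then have "wf (E\<inverse>)" using assms(1) finite_acyclic_wf_converse unfolding is_dag_def by blast
  have "v \<in> V \<longrightarrow> v \<in> P" for v
  proof (induction v rule: wf_induct_rule[OF \<open>wf (E\<inverse>)\<close>])
    case (1 v)
    show ?case
    proof (cases "\<exists>w. (v, w) \<in> E")
      case True
      then obtain w where "(v, w) \<in> E" by blast
      with 1 EV assms(3) show ?thesis unfolding in_nbrs_def by blast
    qed (use assms(2) in \<open>auto simp: sinks_def\<close>)
  qed
  then show ?thesis by blast
qed

lemma card_le_processors_mult_cost:
  assumes "is_dag V E" "pebbling_strategy V E k r g cs costs"
  shows "card V \<le> k * sum_list costs"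
proof -
  let ?P = "pebbled_upto cs (length costs)"
  have P: "finite ?P" "card ?P \<le> k * sum_list costs" "\<forall>v\<in>?P. in_nbrs E v \<subseteq> ?P"
    using pebbled_upto_invariant[OF assms(2) order_refl] by auto
  have "sinks V E \<subseteq> pebbled (last cs)"
    using assms(2) unfolding pebbling_strategy_def terminal_config_def pebbled_def by blast
  also have "\<dots> \<subseteq> ?P"
    using pebbling_strategy_last[OF assms(2)] unfolding pebbled_upto_def by auto
  finally have "V \<subseteq> ?P" using dag_predecessor_closed_superset[OF assms(1)] P(3) by blast
  then have "card V \<le> card ?P" using P(1) by (rule card_mono[rotated])
  with P(2) show ?thesis by linarith
qed

lemma card_le_processors_mult_OPT:
  "is_dag V E \<Longrightarrow> has_strategy V E k r g \<Longrightarrow> card V \<le> k * OPT V E k r g"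
  using OPT_attained card_le_processors_mult_cost by metis

section \<open>Strategies without I/O\<close>

lemma io_free_blue_empty:
  assumes "pebbling_strategy V E k r g cs costs" "\<forall>i<length costs. costs ! i \<noteq> g"
    and "i \<le> length costs"
  shows "snd (cs ! i) = {}"
  using assms(3)
proof (induction i)
  case 0
  then show ?case using assms(1) by (simp add: pebbling_strategy_def initial_config_def)
next
  case (Suc i)
  have "mpp_step V E k g (cs ! i) (cs ! Suc i) (costs ! i)" "costs ! i \<noteq> g"
    using assms(1,2) Suc.prems unfolding pebbling_strategy_def by auto
  then have "snd (cs ! Suc i) \<subseteq> snd (cs ! i)" by (rule mpp_step_without_io[THEN conjunct1])
  with Suc show ?case by simp
qed

lemma io_free_red_predecessors:
  assumes st: "pebbling_strategy V E k r g cs costs" and io_free: "\<forall>i<length costs. costs ! i \<noteq> g"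
    and "X \<noteq> {}" "t \<le> length costs" "X \<subseteq> fst (cs ! t) j"
  shows "\<exists>s\<le>t. \<exists>w\<in>X. X \<union> in_nbrs E w \<subseteq> fst (cs ! s) j"
proof -
  have "fst (cs ! 0) j = {}" using st by (simp add: pebbling_strategy_def initial_config_def)
  then obtain s where "s < t" "\<forall>i\<le>s. \<not> X \<subseteq> fst (cs ! i) j" "X \<subseteq> fst (cs ! Suc s) j"
    using ex_least_nat_less[of "\<lambda>s. X \<subseteq> fst (cs ! s) j" t] assms(3,5) by auto
  then have s: "s < t" "\<not> X \<subseteq> fst (cs ! s) j" "X \<subseteq> fst (cs ! Suc s) j" by auto
  have "mpp_step V E k g (cs ! s) (cs ! Suc s) (costs ! s)" "costs ! s \<noteq> g"
    using st io_free s(1) assms(4) unfolding pebbling_strategy_def by auto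
  then have "fst (cs ! Suc s) j \<subseteq> fst (cs ! s) j \<or>
      (\<exists>w. fst (cs ! Suc s) j = insert w (fst (cs ! s) j) \<and> in_nbrs E w \<subseteq> fst (cs ! s) j)"
    by (blast dest: mpp_step_without_io)
  with s(2,3) obtain w where w: "fst (cs ! Suc s) j = insert w (fst (cs ! s) j)"
    "in_nbrs E w \<subseteq> fst (cs ! s) j"
    by blast
  have "w \<in> X" using w(1) s(2,3) by auto
  moreover have "X \<union> in_nbrs E w \<subseteq> fst (cs ! Suc s) j" using w s(3) by blast
  moreover have "Suc s \<le> t" using s(1) by simp
  ultimately show ?thesis by blast
qed

fun valid_run :: "'v set \<Rightarrow> ('v \<times> 'v) set \<Rightarrow> nat \<Rightarrow> nat \<Rightarrow> nat \<Rightarrow> 'v config \<Rightarrow>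
    (nat \<times> 'v config) list \<Rightarrow> bool" where
  "valid_run V E k r g C [] = True"
| "valid_run V E k r g C ((c, C') # rest) =
     (mpp_step V E k g C C' c \<and> valid_config k r C' \<and> valid_run V E k r g C' rest)"

lemma valid_run_nth:
  "valid_run V E k r g C steps \<Longrightarrow> i < length steps \<Longrightarrow>
   mpp_step V E k g ((C # map snd steps) ! i) ((C # map snd steps) ! Suc i) (map fst steps ! i) \<and>
   valid_config k r ((C # map snd steps) ! Suc i)"
proof (induction steps arbitrary: C i)
  case (Cons step rest)
  then show ?case by (cases step; cases i) auto
qed simp

lemma valid_run_pebbling_strategy:
  assumes "valid_run V E k r g initial_config steps"
    and "terminal_config V E (last (initial_config # map snd steps))"
  shows "pebbling_strategy V E k r g (initial_config # map snd steps) (map fst steps)"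
  unfolding pebbling_strategy_def
proof (intro conjI allI impI)
  fix i
  assume "i < length (initial_config # map snd steps)"
  then show "valid_config k r ((initial_config # map snd steps) ! i)"
    using valid_run_nth[OF assms(1), of "i - 1"]
    by (cases i) (auto simp: valid_config_def initial_config_def)
next
  fix i
  assume "i < length (map fst steps)"
  then show "mpp_step V E k g ((initial_config # map snd steps) ! i)
      ((initial_config # map snd steps) ! Suc i) (map fst steps ! i)"
    using valid_run_nth[OF assms(1), of i] by simp
qed (use assms(2) in simp_all)

definition red_pair :: "'v set \<Rightarrow> 'v set \<Rightarrow> nat \<Rightarrow> 'v set" where
  "red_pair A B = (\<lambda>j. if j = 0 then A else if j = 1 then B else {})"

lemma initial_config_red_pair: "initial_config = (red_pair {} {}, {})"
  by (auto simp: initial_config_def red_pair_def fun_eq_iff)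

lemma compute_step_0:
  "v \<in> V \<Longrightarrow> in_nbrs E v \<subseteq> A \<Longrightarrow> 0 < k \<Longrightarrow> A' = insert v A \<Longrightarrow>
   mpp_step V E k g (red_pair A B, X) (red_pair A' B, X) 1"
  unfolding mpp_step_def Let_def
  by (intro disjI2 disjI1 exI[of _ "{(0, v)}"])
     (auto simp: selection_def add_red_def red_pair_def fun_eq_iff)

lemma compute_step_01:
  "v \<in> V \<Longrightarrow> in_nbrs E v \<subseteq> A \<Longrightarrow> w \<in> V \<Longrightarrow> in_nbrs E w \<subseteq> B \<Longrightarrow> 1 < k \<Longrightarrow>
   A' = insert v A \<Longrightarrow> B' = insert w B \<Longrightarrow>
   mpp_step V E k g (red_pair A B, X) (red_pair A' B', X) 1"
  unfolding mpp_step_def Let_def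
  by (intro disjI2 disjI1 exI[of _ "{(0, v), (1, w)}"])
     (auto simp: selection_def add_red_def red_pair_def fun_eq_iff)

lemma save_step_0:
  "v \<in> A \<Longrightarrow> 0 < k \<Longrightarrow> X' = insert v X \<Longrightarrow>
   mpp_step V E k g (red_pair A B, X) (red_pair A B, X') g"
  unfolding mpp_step_def Let_def
  by (intro disjI1 exI[of _ "{(0, v)}"]) (auto simp: selection_def red_pair_def fun_eq_iff)

lemma load_step_0:
  "v \<in> X \<Longrightarrow> 0 < k \<Longrightarrow> A' = insert v A \<Longrightarrow>
   mpp_step V E k g (red_pair A B, X) (red_pair A' B, X) g"
  unfolding mpp_step_def Let_def
  by (intro disjI2 disjI1 exI[of _ "{(0, v)}"])
     (auto simp: selection_def add_red_def red_pair_def fun_eq_iff)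

lemma remove_step_0:
  "v \<in> A \<Longrightarrow> A' = A - {v} \<Longrightarrow> mpp_step V E k g (red_pair A B, X) (red_pair A' B, X) 0"
  unfolding mpp_step_def Let_def
  by (intro disjI2 conjI disjI1 exI[of _ 0] exI[of _ v]) (auto simp: red_pair_def fun_eq_iff)

section \<open>The example\<close>

definition ex_V :: "nat set" where "ex_V = {0, 1, 2, 3, 4, 5}"
definition ex_E :: "(nat \<times> nat) set" where "ex_E = {(0, 2), (1, 2), (0, 3), (1, 3), (2, 4), (3, 4)}"

lemma in_nbrs_ex_E: "in_nbrs ex_E 2 = {0, 1}" "in_nbrs ex_E 3 = {0, 1}" "in_nbrs ex_E 4 = {2, 3}"
  by (auto simp: in_nbrs_def ex_E_def)

lemma sinks_ex: "sinks ex_V ex_E = {4, 5}"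
  by (auto simp: sinks_def ex_V_def ex_E_def)

lemma is_dag_ex: "is_dag ex_V ex_E"
  unfolding is_dag_def
proof (intro conjI)
  show "acyclic ex_E" by (rule acyclic_subset[OF wf_acyclic[OF wf_less_than]]) (auto simp: ex_E_def)
qed (auto simp: ex_V_def ex_E_def)

lemma ex_cost_ge_g:
  assumes st: "pebbling_strategy ex_V ex_E k 3 g cs costs"
  shows "g \<le> sum_list costs"
proof (rule ccontr)
  assume cheap: "\<not> g \<le> sum_list costs"
  have io_free: "\<forall>i<length costs. costs ! i \<noteq> g"
  proof (intro allI impI notI)
    fix i assume "i < length costs" "costs ! i = g"
    then have "g \<in> set costs" by (metis nth_mem)
    then have "g \<le> sum_list costs" by (rule member_le_sum_list) simp
    with cheap show False by simp
  qed
  let ?L = "length costs"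
  have "sinks ex_V ex_E \<subseteq> pebbled (cs ! ?L)"
    using st pebbling_strategy_last[OF st]
    unfolding pebbling_strategy_def terminal_config_def pebbled_def by simp
  moreover have "snd (cs ! ?L) = {}" by (rule io_free_blue_empty[OF st io_free order_refl])
  ultimately obtain j where "{4} \<subseteq> fst (cs ! ?L) j"
    unfolding sinks_ex pebbled_def by auto
  from io_free_red_predecessors[OF st io_free insert_not_empty order_refl this]
  obtain s where s: "s \<le> ?L" "{2, 3} \<subseteq> fst (cs ! s) j"
    by (auto simp: in_nbrs_ex_E)
  from io_free_red_predecessors[OF st io_free insert_not_empty s]
  obtain s' w where s': "s' \<le> s" "w \<in> {2, 3}" "{2, 3} \<union> in_nbrs ex_E w \<subseteq> fst (cs ! s') j"
    by blast
  then have red: "{0, 1, 2, 3} \<subseteq> fst (cs ! s') j" by (auto simp: in_nbrs_ex_E)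
  have "valid_config k 3 (cs ! s')"
    using st s(1) s'(1) unfolding pebbling_strategy_def by simp
  then have "finite (fst (cs ! s') j)" "card (fst (cs ! s') j) \<le> 3"
    by (simp_all add: valid_config_red_card)
  moreover have "card {0::nat, 1, 2, 3} \<le> card (fst (cs ! s') j)"
    using red calculation(1) by (rule card_mono[rotated])
  ultimately show False by simp
qed

lemmas ex_simps = ex_V_def ex_E_def in_nbrs_def valid_config_def red_pair_def

definition ex_run_1 :: "(nat \<times> nat config) list" where
  "ex_run_1 = [(1, (red_pair {0} {}, {})), (1, (red_pair {0,1} {}, {})),
    (1, (red_pair {0,1,2} {}, {})), (1, (red_pair {0,1,2,3} {}, {})),
    (1, (red_pair {0,1,2,3,4} {}, {})), (1, (red_pair {0,1,2,3,4,5} {}, {}))]"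

definition ex_run_2 :: "(nat \<times> nat config) list" where
  "ex_run_2 = [(1, (red_pair {0} {5}, {})), (1, (red_pair {0,1} {5}, {})),
    (1, (red_pair {0,1,2} {5}, {})), (1, (red_pair {0,1,2,3} {5}, {})),
    (1, (red_pair {0,1,2,3,4} {5}, {}))]"

text \<open>With only three red pebbles, processor 0 parks 2 in slow memory while it computes 3.\<close>

definition ex_run_4 :: "(nat \<times> nat config) list" where
  "ex_run_4 = [(1, (red_pair {0} {5}, {})), (1, (red_pair {0,1} {5}, {})),
    (1, (red_pair {0,1,2} {5}, {})), (100, (red_pair {0,1,2} {5}, {2})),
    (0, (red_pair {0,1} {5}, {2})), (1, (red_pair {0,1,3} {5}, {2})),
    (0, (red_pair {1,3} {5}, {2})), (0, (red_pair {3} {5}, {2})),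
    (100, (red_pair {2,3} {5}, {2})), (1, (red_pair {2,3,4} {5}, {2}))]"

lemmas ex_steps = compute_step_0 compute_step_01 save_step_0 load_step_0 remove_step_0

lemma pebbling_strategy_ex_1:
  "pebbling_strategy ex_V ex_E 1 12 100 (initial_config # map snd ex_run_1) (map fst ex_run_1)"
proof (rule valid_run_pebbling_strategy)
  show "valid_run ex_V ex_E 1 12 100 initial_config ex_run_1"
    unfolding ex_run_1_def initial_config_red_pair valid_run.simps
    by (intro conjI; (rule ex_steps)?; auto simp: ex_simps)
qed (simp add: ex_run_1_def terminal_config_def sinks_ex red_pair_def)

lemma pebbling_strategy_ex_2:
  "pebbling_strategy ex_V ex_E 2 6 100 (initial_config # map snd ex_run_2) (map fst ex_run_2)"
proof (rule valid_run_pebbling_strategy)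
  show "valid_run ex_V ex_E 2 6 100 initial_config ex_run_2"
    unfolding ex_run_2_def initial_config_red_pair valid_run.simps
    by (intro conjI; (rule ex_steps)?; auto simp: ex_simps)
qed (auto simp: ex_run_2_def terminal_config_def sinks_ex red_pair_def)

lemma pebbling_strategy_ex_4:
  "pebbling_strategy ex_V ex_E 4 3 100 (initial_config # map snd ex_run_4) (map fst ex_run_4)"
proof (rule valid_run_pebbling_strategy)
  show "valid_run ex_V ex_E 4 3 100 initial_config ex_run_4"
    unfolding ex_run_4_def initial_config_red_pair valid_run.simps
    by (intro conjI; (rule ex_steps)?; auto simp: ex_simps)
qed (auto simp: ex_run_4_def terminal_config_def sinks_ex red_pair_def)

theorem lemma10:
  shows "\<exists>(V :: nat set) E g r0. is_dag V E \<and> g > 0 \<and> r0 > 0 \<and> 4 dvd r0 \<and>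
     (\<forall>j\<in>{1, 2, 4}. has_strategy V E j (r0 div j) g) \<and>
     OPT V E 2 (r0 div 2) g < OPT V E 1 (r0 div 1) g \<and>
     OPT V E 2 (r0 div 2) g < OPT V E 4 (r0 div 4) g"
proof -
  have strategies: "has_strategy ex_V ex_E 1 12 100" "has_strategy ex_V ex_E 2 6 100"
    "has_strategy ex_V ex_E 4 3 100"
    using pebbling_strategy_ex_1 pebbling_strategy_ex_2 pebbling_strategy_ex_4
    unfolding has_strategy_def by blast+
  have "OPT ex_V ex_E 2 6 100 \<le> 5"
    using OPT_le_cost[OF pebbling_strategy_ex_2] by (simp add: ex_run_2_def)
  moreover have "6 \<le> OPT ex_V ex_E 1 12 100"
    using card_le_processors_mult_OPT[OF is_dag_ex strategies(1)] by (simp add: ex_V_def)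
  moreover have "100 \<le> OPT ex_V ex_E 4 3 100"
    using OPT_attained[OF strategies(3)] ex_cost_ge_g by metis
  ultimately show ?thesis
    using is_dag_ex strategies
    by (intro exI[of _ ex_V] exI[of _ ex_E] exI[of _ "100::nat"] exI[of _ "12::nat"]) simp
qed

end
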